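(* Let $f$ be a non-constant meromorphic function on $\mathbb{C}$, let $\mathbb{S}^1=\{z\in\mathbb{C}:|z|=1\}$, and let $A\subset\mathbb{S}^1$ be a non-degenerate continuum. Let $\mathcal{C}'=\{(x,y)\in\mathbb{R}^2: P(x,y)=0\}\subset\mathbb{R}^2\cong\mathbb{C}$ be the real algebraic curve defined by a non-constant irreducible real polynomial $P(x,y)\in\mathbb{R}[x,y]$. If $f(A)\subset\mathcal{C}'$, then $f$ is a rational function. Moreover, if $\mathcal{C}'=\mathbb{S}^1$, then $f$ is a quotient of two finite Blaschke products.
   Context: A non-degenerate continuum is a compact connected set containing more than one point. The plane $\mathbb{R}^2$ is identified with $\mathbb{C}$ via $(x,y)\mapsto x+iy$. A finite Blaschke product is a function of the form $e^{i\theta}\prod_{j=1}^{n}\frac{z-a_j}{1-\overline{a_j}z}$ with $\theta\in\mathbb{R}$, $n\ge 0$, and $|a_j|<1$. *)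

theory Defs
  imports "HOL-Complex_Analysis.Complex_Analysis" "HOL-Computational_Algebra.Polynomial"
begin

text \<open>Bivariate real polynomials P(x,y) are represented as elements of (real poly) poly,
  i.e. polynomials in y whose coefficients are polynomials in x (R[x][y] = R[x,y]).\<close>

definition eval2 :: "real poly poly \<Rightarrow> real \<Rightarrow> real \<Rightarrow> real" where
  "eval2 P x y = poly (map_poly (\<lambda>q. poly q x) P) y"

definition alg_curve :: "real poly poly \<Rightarrow> complex set" where
  "alg_curve P = {z. eval2 P (Re z) (Im z) = 0}"

definition finite_blaschke :: "(complex \<Rightarrow> complex) \<Rightarrow> bool" where
  "finite_blaschke B \<longleftrightarrow> (\<exists>(\<theta>::real) (as::complex list).
      (\<forall>a\<in>set as. norm a < 1) \<and>
      B = (\<lambda>z. exp (\<i> * of_real \<theta>) * prod_list (map (\<lambda>a. (z - a) / (1 - cnj a * z)) as)))"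

definition rational_function :: "(complex \<Rightarrow> complex) \<Rightarrow> bool" where
  "rational_function f \<longleftrightarrow> (\<exists>p q :: complex poly. q \<noteq> 0 \<and>
      (\<forall>z. poly q z \<noteq> 0 \<longrightarrow> f z = poly p z / poly q z))"

definition blaschke_quotient :: "(complex \<Rightarrow> complex) \<Rightarrow> bool" where
  "blaschke_quotient f \<longleftrightarrow> (\<exists>B1 B2 S. finite_blaschke B1 \<and> finite_blaschke B2 \<and> finite S \<and>
      (\<forall>z. z \<notin> S \<longrightarrow> f z = B1 z / B2 z))"

end

theory Submission
  imports Defs "HOL-Computational_Algebra.Polynomial_Factorial" "HOL-Computational_Algebra.Field_as_Ring"
    "HOL-Computational_Algebra.Fundamental_Theorem_Algebra"
begin

text \<open>On the unit circle \<open>z = 1/cnj z\<close>, so on \<open>A\<close> the curve equation \<open>P(Re f, Im f) = 0\<close>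
  reads \<open>R(f z, cnj (f (1/cnj z))) = 0\<close> for a complex polynomial \<open>R\<close>. The left-hand side is
  holomorphic off a countable set and vanishes on the non-discrete set \<open>A\<close>, hence everywhere.
  For large \<open>|z|\<close> this exhibits \<open>f z\<close> as a root of a polynomial whose coefficients are
  meromorphic functions of \<open>w = 1/cnj z\<close> near \<open>0\<close>; so \<open>f\<close> grows at most polynomially, has
  finitely many poles, and is rational by Liouville's theorem.

  If the curve is the unit circle, then \<open>f = p/q\<close> with \<open>|p| = |q|\<close> on \<open>A\<close>. Replacing a root
  \<open>a\<close> of \<open>p\<close> or \<open>q\<close> in the open disc by its reflection \<open>1/cnj a\<close> changes \<open>p/q\<close> by a
  Blaschke factor and keeps \<open>|p|\<close> and \<open>|q|\<close> on the circle. Once no roots are left in the disc,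
  the identity \<open>p p* = q q*\<close> for the reflected polynomials forces \<open>p/q\<close> to be a unimodular
  constant.\<close>

section \<open>Bivariate complex polynomials\<close>

lemma poly_hom_commute:
  fixes h :: "'a::comm_ring_1 \<Rightarrow> 'b::comm_ring_1"
  assumes add: "\<And>a b. h (a + b) = h a + h b" and mult: "\<And>a b. h (a * b) = h a * h b"
    and zero: "h 0 = 0"
  shows "h (poly p x) = poly (map_poly h p) (h x)"
proof (induction p rule: pCons_induct)
  case 0
  then show ?case by (simp add: zero)
next
  case (pCons a p)
  then show ?case by (simp add: map_poly_pCons[of h, OF zero] add mult)
qed

definition poly2 :: "complex poly poly \<Rightarrow> complex \<Rightarrow> complex \<Rightarrow> complex" where
  "poly2 R u v = poly (poly R [:u:]) v"

lemma poly2_altdef: "poly2 R u v = (\<Sum>k\<le>degree R. poly (coeff R k) v * u ^ k)"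
  by (simp add: poly2_def poly_altdef[of R] poly_sum poly_mult poly_power mult.commute)

lemma eval2_eq_0_imp_eq_0:
  assumes "\<And>x y. eval2 P x y = 0"
  shows "P = 0"
proof (rule poly_eqI)
  fix j
  have "poly (coeff P j) x = 0" for x
  proof -
    have "map_poly (\<lambda>q. poly q x) P = 0"
      unfolding poly_all_0_iff_0[symmetric] using assms by (simp add: eval2_def)
    then have "coeff (map_poly (\<lambda>q. poly q x) P) j = 0"
      by simp
    then show ?thesis
      by (simp add: coeff_map_poly)
  qed
  then show "coeff P j = coeff 0 j"
    using poly_all_0_iff_0 by auto
qed

text \<open>Substituting \<open>x = (u + v)/2\<close> and \<open>y = (u - v)/(2\<i>)\<close> into \<open>P\<close> gives a complex polynomial
  \<open>R(u, v)\<close> with \<open>R(u, cnj u) = P(Re u, Im u)\<close>.\<close>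

lemma eval2_conv_poly2:
  fixes P :: "real poly poly"
  assumes "P \<noteq> 0"
  obtains R where "R \<noteq> 0" "\<And>u. poly2 R u (cnj u) = complex_of_real (eval2 P (Re u) (Im u))"
proof -
  define X :: "complex poly poly" where "X = [:[:0, 1/2:], [:1/2:]:]"
  define Y :: "complex poly poly" where "Y = [:[:0, \<i>/2:], [:-\<i>/2:]:]"
  define C :: "real \<Rightarrow> complex poly poly" where "C = (\<lambda>c. [:[:complex_of_real c:]:])"
  define R where "R = poly (map_poly (\<lambda>q. poly (map_poly C q) X) P) Y"
  have R_eval: "poly2 R u (cnj u) = complex_of_real (eval2 P (Re u) (Im u))" for u
  proof -
    define ev where "ev = (\<lambda>T. poly2 T u (cnj u))"
    have ev_add: "ev (a + b) = ev a + ev b" and ev_mult: "ev (a * b) = ev a * ev b" for a b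
      by (simp_all add: ev_def poly2_def)
    have ev_0: "ev 0 = 0"
      by (simp add: ev_def poly2_def)
    note ev_hom = poly_hom_commute[OF ev_add ev_mult ev_0]
    have ev_X: "ev X = of_real (Re u)"
      by (simp add: ev_def poly2_def X_def complex_eq_iff)
    have ev_Y: "ev Y = of_real (Im u)"
      by (simp add: ev_def poly2_def Y_def complex_eq_iff algebra_simps)
    have ev_C: "ev \<circ> C = complex_of_real"
      by (auto simp: ev_def poly2_def C_def)
    have ev_inner: "ev (poly (map_poly C q) X) = of_real (poly q (Re u))" for q
    proof -
      have "ev (poly (map_poly C q) X) = poly (map_poly ev (map_poly C q)) (ev X)"
        by (rule ev_hom)
      also have "map_poly ev (map_poly C q) = map_poly (ev \<circ> C) q"
        by (rule map_poly_map_poly) (simp_all add: ev_0 C_def)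
      also have "ev \<circ> C = complex_of_real"
        by (rule ev_C)
      also have "poly (map_poly complex_of_real q) (ev X) = of_real (poly q (Re u))"
        unfolding ev_X by (rule poly_hom_commute[symmetric]) auto
      finally show ?thesis .
    qed
    have "ev R = poly (map_poly ev (map_poly (\<lambda>q. poly (map_poly C q) X) P)) (ev Y)"
      unfolding R_def by (rule ev_hom)
    also have "map_poly ev (map_poly (\<lambda>q. poly (map_poly C q) X) P)
               = map_poly (ev \<circ> (\<lambda>q. poly (map_poly C q) X)) P"
      by (rule map_poly_map_poly) (simp_all add: ev_0 C_def)
    also have "ev \<circ> (\<lambda>q. poly (map_poly C q) X) = complex_of_real \<circ> (\<lambda>q. poly q (Re u))"
      by (auto simp: ev_inner)
    also have "map_poly (complex_of_real \<circ> (\<lambda>q. poly q (Re u))) P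
               = map_poly complex_of_real (map_poly (\<lambda>q. poly q (Re u)) P)"
      by (rule map_poly_map_poly[symmetric]) simp_all
    also have "poly \<dots> (ev Y) = of_real (eval2 P (Re u) (Im u))"
      unfolding ev_Y eval2_def by (rule poly_hom_commute[symmetric]) auto
    finally show ?thesis
      by (simp add: ev_def)
  qed
  moreover have "R \<noteq> 0"
  proof
    assume "R = 0"
    then have "eval2 P x y = 0" for x y
      using R_eval[of "Complex x y"] by (simp add: poly2_def)
    then show False
      using assms eval2_eq_0_imp_eq_0 by blast
  qed
  ultimately show thesis
    using that by blast
qed

section \<open>Meromorphic functions\<close>

lemma meromorphic_on_poly_compose:
  "f meromorphic_on A \<Longrightarrow> (\<lambda>z. poly c (f z)) meromorphic_on A"
  unfolding poly_altdef by (intro meromorphic_intros) auto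

lemma nicely_meromorphic_poles_sparse:
  assumes "f nicely_meromorphic_on UNIV"
  shows "{z. is_pole f z} sparse_in UNIV"
proof -
  have "eventually (\<lambda>z. \<not> is_pole f z) (cosparse UNIV)"
    using assms by (intro meromorphic_on_imp_not_pole_cosparse) (auto simp: nicely_meromorphic_on_def)
  then show ?thesis
    by (simp add: eventually_cosparse)
qed

lemma nicely_meromorphic_holomorphic_off_poles:
  assumes "f nicely_meromorphic_on UNIV"
  shows "f holomorphic_on {z. \<not> is_pole f z}"
proof -
  have "f analytic_on {z. \<not> is_pole f z}"
    by (rule nicely_meromorphic_without_singularities)
       (use nicely_meromorphic_on_subset[OF assms] in auto)
  then show ?thesis
    using analytic_imp_holomorphic by blast
qed

lemma meromorphic_on_power_bound:
  assumes "h meromorphic_on {z0}"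
  shows "\<exists>N. \<forall>\<^sub>F w in at z0. \<forall>M\<ge>N. norm (h w) * norm (w - z0) ^ M \<le> 1"
proof (cases "\<forall>\<^sub>F w in at z0. h w = 0")
  case True
  show ?thesis
    by (rule exI[of _ 0]) (use True in \<open>eventually_elim, auto\<close>)
next
  case False
  then have freq: "\<exists>\<^sub>F w in at z0. h w \<noteq> 0"
    by (simp add: not_eventually)
  have iso: "isolated_singularity_at h z0" and ness: "not_essential h z0"
    using assms meromorphic_on_isolated_singularity meromorphic_on_not_essential by blast+
  define n where "n = zorder h z0"
  obtain r where r: "r > 0" "zor_poly h z0 holomorphic_on cball z0 r"
      "\<And>w. w \<in> cball z0 r - {z0} \<Longrightarrow> h w = zor_poly h z0 w * (w - z0) powi n"
    using zorder_exist[OF iso ness freq] unfolding n_def by blast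
  have "compact (zor_poly h z0 ` cball z0 r)"
    using r(2) by (intro compact_continuous_image holomorphic_on_imp_continuous_on) auto
  then obtain B where B: "B > 0" "\<And>w. w \<in> cball z0 r \<Longrightarrow> norm (zor_poly h z0 w) \<le> B"
    using compact_imp_bounded bounded_pos by (metis imageI)
  define N where "N = nat (- n) + 1"
  have bound: "norm (h w) * norm (w - z0) ^ M \<le> 1"
    if w: "w \<noteq> z0" "dist w z0 < min r (min 1 (1 / B))" and M: "N \<le> M" for w M
  proof -
    define d where "d = norm (w - z0)"
    have d: "d > 0" "d < 1" "d < 1 / B"
      using w by (auto simp: d_def dist_norm)
    have w_in: "w \<in> cball z0 r - {z0}"
      using w by (auto simp: dist_norm norm_minus_commute)
    have exp_pos: "n + int M \<ge> 1"
      using M unfolding N_def by linarith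
    have "norm (h w) * d ^ M = norm (zor_poly h z0 w) * d powi (n + int M)"
      using r(3)[OF w_in] d by (simp add: norm_mult norm_power_int d_def power_int_add)
    also have "d powi (n + int M) = d ^ nat (n + int M)"
      using exp_pos by (metis nat_0_le order_trans zero_le_one power_int_of_nat)
    also have "\<dots> \<le> d"
      using d exp_pos power_decreasing[of 1 "nat (n + int M)" d] by simp
    finally have "norm (h w) * d ^ M \<le> norm (zor_poly h z0 w) * d"
      by (simp add: mult_left_mono)
    also have "\<dots> \<le> B * (1 / B)"
      using B w_in d by (intro mult_mono) auto
    finally show ?thesis
      using B by (simp add: d_def)
  qed
  have "min r (min 1 (1 / B)) > 0"
    using r B by simp
  then show ?thesis
    using bound unfolding eventually_at by blast
qed

lemma meromorphic_family_power_bound: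
  assumes "finite K" "\<And>k. k \<in> K \<Longrightarrow> h k meromorphic_on {z0}"
  shows "\<exists>N. \<forall>\<^sub>F w in at z0. \<forall>k\<in>K. norm (h k w) * norm (w - z0) ^ N \<le> 1"
proof -
  have "\<forall>k\<in>K. \<exists>N. \<forall>\<^sub>F w in at z0. \<forall>M\<ge>N. norm (h k w) * norm (w - z0) ^ M \<le> 1"
    using meromorphic_on_power_bound assms(2) by blast
  then obtain N where N: "\<forall>k\<in>K. \<forall>\<^sub>F w in at z0. \<forall>M\<ge>N k. norm (h k w) * norm (w - z0) ^ M \<le> 1"
    by (rule bchoice[elim_format]) blast
  have "\<forall>\<^sub>F w in at z0. \<forall>k\<in>K. norm (h k w) * norm (w - z0) ^ (\<Sum>k\<in>K. N k) \<le> 1"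
  proof (rule eventually_ball_finite[OF assms(1)], intro ballI)
    fix k assume k: "k \<in> K"
    have le: "N k \<le> (\<Sum>k\<in>K. N k)"
      using assms(1) k by (intro member_le_sum) auto
    show "\<forall>\<^sub>F w in at z0. norm (h k w) * norm (w - z0) ^ (\<Sum>k\<in>K. N k) \<le> 1"
      using bspec[OF N k] by eventually_elim (use le in auto)
  qed
  then show ?thesis ..
qed

lemma nicely_meromorphic_poly_eventually_nonzero:
  assumes f: "f nicely_meromorphic_on UNIV" and nc: "\<not> f constant_on UNIV" and c: "c \<noteq> 0"
  shows "\<forall>\<^sub>F w in at z0. poly c (f w) \<noteq> 0"
proof -
  have "(\<lambda>w. poly c (f w)) meromorphic_on UNIV"
    using f by (intro meromorphic_on_poly_compose) (auto simp: nicely_meromorphic_on_def)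
  from meromorphic_imp_constant_or_avoid[OF this open_UNIV connected_UNIV, of 0]
  consider "\<forall>\<^sub>\<approx>z\<in>UNIV. poly c (f z) = 0" | "\<forall>\<^sub>\<approx>z\<in>UNIV. poly c (f z) \<noteq> 0"
    by blast
  then show ?thesis
  proof cases
    case 1
    \<comment> \<open>Off a sparse set \<open>f\<close> is continuous with values among the finitely many roots of \<open>c\<close>.\<close>
    define T where "T = {z. is_pole f z} \<union> {z. poly c (f z) \<noteq> 0}"
    have T: "T sparse_in UNIV"
      unfolding T_def using nicely_meromorphic_poles_sparse[OF f] 1
      by (intro sparse_in_union') (simp_all add: eventually_cosparse)
    define W where "W = UNIV - T"
    have W_open: "open W"
      unfolding W_def using T by (rule open_diff_sparse_pts[OF open_UNIV])
    have W_connected: "connected W"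
      unfolding W_def using T by (intro sparse_imp_connected) auto
    have W_nonempty: "W \<noteq> {}"
    proof
      assume "W = {}"
      then have "T = UNIV"
        by (auto simp: W_def)
      with T show False
        unfolding sparse_in_open[OF open_UNIV] by simp
    qed
    have "continuous_on W f"
      using nicely_meromorphic_holomorphic_off_poles[OF f]
      by (rule holomorphic_on_imp_continuous_on[OF holomorphic_on_subset]) (auto simp: W_def T_def)
    moreover have "finite (f ` W)"
      by (rule finite_subset[OF _ poly_roots_finite[OF c]]) (auto simp: W_def T_def)
    ultimately have "f constant_on W"
      using W_connected continuous_finite_range_constant by blast
    then have "f constant_on UNIV"
      by (rule constant_on_extend_nicely_meromorphic_on[OF f _ W_open open_UNIV connected_UNIV W_nonempty])
         auto
    with nc show ?thesis
      by simp
  next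
    case 2
    then show ?thesis
      by (rule eventually_cosparse_imp_eventually_at) auto
  qed
qed

section \<open>The reflection identity\<close>

lemma holomorphic_on_reflection:
  assumes f: "f nicely_meromorphic_on UNIV"
  shows "(\<lambda>w. cnj (f (inverse (cnj w)))) holomorphic_on {w. w \<noteq> 0 \<and> \<not> is_pole f (inverse (cnj w))}"
proof -
  define V where "V = cnj ` {z. \<not> is_pole f z}"
  have "closed {z. is_pole f z}"
    using nicely_meromorphic_poles_sparse[OF f] by (rule sparse_in_UNIV_imp_closed)
  then have "open V"
    unfolding V_def image_cnj_conv_vimage_cnj
    by (intro open_vimage) (auto simp: Collect_neg_eq intro: continuous_intros)
  moreover have "cnj ` V = {z. \<not> is_pole f z}"
    unfolding V_def by (auto simp: image_image)
  ultimately have "cnj \<circ> f \<circ> cnj holomorphic_on V"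
    using nicely_meromorphic_holomorphic_off_poles[OF f] by (intro holomorphic_on_compose_cnj_cnj) auto
  moreover have "inverse holomorphic_on {w. w \<noteq> 0 \<and> \<not> is_pole f (inverse (cnj w))}"
    by (intro holomorphic_intros) auto
  moreover have "inverse ` {w. w \<noteq> 0 \<and> \<not> is_pole f (inverse (cnj w))} \<subseteq> V"
    unfolding V_def by (auto simp: image_iff intro!: exI[of _ "cnj (inverse _)"])
  ultimately have "(cnj \<circ> f \<circ> cnj) \<circ> inverse holomorphic_on {w. w \<noteq> 0 \<and> \<not> is_pole f (inverse (cnj w))}"
    by (blast intro: holomorphic_on_compose_gen)
  then show ?thesis
    by (simp add: o_def)
qed

lemma inverse_cnj_unit_circle:
  assumes "norm z = 1"
  shows "inverse (cnj z) = z"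
proof -
  have "z * cnj z = 1"
    using complex_norm_square[of z] assms by simp
  then show ?thesis
    by (intro inverse_unique) (simp add: mult.commute)
qed

text \<open>On the unit circle \<open>inverse (cnj z) = z\<close>, so a relation \<open>R(f z, cnj (f z)) = 0\<close> on a
  non-discrete subset of the circle continues analytically to all \<open>z\<close>.\<close>

lemma nicely_meromorphic_reflection_identity:
  fixes f :: "complex \<Rightarrow> complex" and R :: "complex poly poly"
  assumes f: "f nicely_meromorphic_on UNIV"
    and A: "A \<subseteq> sphere 0 1" "\<xi> \<in> A" "\<xi> islimpt A" "\<forall>z\<in>A. \<not> is_pole f z"
    and R_A: "\<forall>z\<in>A. poly2 R (f z) (cnj (f z)) = 0"
    and z: "z \<noteq> 0" "\<not> is_pole f z" "\<not> is_pole f (inverse (cnj z))"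
  shows "poly2 R (f z) (cnj (f (inverse (cnj z)))) = 0"
proof -
  define Pl where "Pl = {z. is_pole f z}"
  have "Pl sparse_in UNIV"
    unfolding Pl_def using f by (rule nicely_meromorphic_poles_sparse)
  then have Pl_closed: "closed Pl" and Pl_countable: "countable Pl"
    using sparse_in_UNIV_imp_closed sparse_imp_countable[OF open_UNIV] by auto
  define \<iota> :: "complex \<Rightarrow> complex" where "\<iota> = (\<lambda>z. inverse (cnj z))"
  define U where "U = UNIV - ({0} \<union> Pl \<union> \<iota> ` Pl)"
  have mem_U: "w \<in> U \<longleftrightarrow> w \<noteq> 0 \<and> w \<notin> Pl \<and> \<iota> w \<notin> Pl" for w
    unfolding U_def \<iota>_def by (auto simp: image_iff)
  have U_eq: "U = (-{0}) \<inter> (-Pl) \<inter> ((-{0}) \<inter> \<iota> -` (-Pl))"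
    using mem_U by auto
  have "continuous_on (-{0}) \<iota>"
    unfolding \<iota>_def by (intro continuous_intros) auto
  then have U_open: "open U"
    unfolding U_eq using Pl_closed by (intro open_Int continuous_open_preimage) auto
  have U_connected: "connected U"
    unfolding U_def by (rule connected_open_diff_countable) (use Pl_countable in auto)
  define G where "G = (\<lambda>w. poly2 R (f w) (cnj (f (inverse (cnj w)))))"
  have G_holomorphic: "G holomorphic_on U"
  proof -
    have "f holomorphic_on U"
      by (rule holomorphic_on_subset[OF nicely_meromorphic_holomorphic_off_poles[OF f]])
         (auto simp: mem_U Pl_def)
    moreover have "(\<lambda>w. cnj (f (inverse (cnj w)))) holomorphic_on U"
      by (rule holomorphic_on_subset[OF holomorphic_on_reflection[OF f]])
         (auto simp: mem_U Pl_def \<iota>_def)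
    ultimately show ?thesis
      unfolding G_def poly2_altdef by (intro holomorphic_intros)
  qed
  have A_circle: "norm w = 1" if "w \<in> A" for w
    using A(1) that by auto
  have A_U: "A \<subseteq> U"
  proof
    fix w assume w: "w \<in> A"
    with A(4) A_circle[OF w] show "w \<in> U"
      by (auto simp: mem_U Pl_def \<iota>_def inverse_cnj_unit_circle)
  qed
  have G_A: "G w = 0" if "w \<in> A" for w
    using R_A that A_circle by (auto simp: G_def inverse_cnj_unit_circle)
  have z_U: "z \<in> U"
    using z by (auto simp: mem_U Pl_def \<iota>_def)
  have "G z = 0"
    by (rule analytic_continuation[OF G_holomorphic U_open U_connected A_U _ A(3) G_A z_U])
       (use A_U A(2) in auto)
  then show ?thesis
    by (simp add: G_def)
qed

section \<open>Polynomial growth and rationality\<close>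

lemma Cauchy_root_bound:
  fixes a :: "nat \<Rightarrow> complex"
  assumes an: "a n \<noteq> 0" and root: "(\<Sum>k\<le>n. a k * u ^ k) = 0"
  shows "norm u \<le> 1 + (\<Sum>k<n. norm (a k)) / norm (a n)"
proof (cases "norm u \<le> 1")
  case True
  have "0 \<le> (\<Sum>k<n. norm (a k)) / norm (a n)"
    by (intro divide_nonneg_nonneg sum_nonneg) auto
  with True show ?thesis
    by linarith
next
  case False
  then have u: "norm u > 1"
    by simp
  show ?thesis
  proof (cases n)
    case 0
    with an root show ?thesis
      by simp
  next
    case (Suc m)
    have "(\<Sum>k\<le>n. a k * u ^ k) = (\<Sum>k<n. a k * u ^ k) + a n * u ^ n"
      using Suc by (simp add: lessThan_Suc_atMost[symmetric])
    then have "a n * u ^ n = - (\<Sum>k<n. a k * u ^ k)"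
      using root by (simp add: eq_neg_iff_add_eq_0 add.commute)
    then have "norm (a n) * norm u ^ n = norm (\<Sum>k<n. a k * u ^ k)"
      by (metis norm_minus_cancel norm_mult norm_power)
    also have "\<dots> \<le> (\<Sum>k<n. norm (a k * u ^ k))"
      by (rule norm_sum)
    also have "\<dots> \<le> (\<Sum>k<n. norm (a k) * norm u ^ m)"
    proof (rule sum_mono)
      fix k assume "k \<in> {..<n}"
      then have "norm u ^ k \<le> norm u ^ m"
        using Suc u by (intro power_increasing) auto
      then show "norm (a k * u ^ k) \<le> norm (a k) * norm u ^ m"
        by (simp add: norm_mult norm_power mult_left_mono)
    qed
    also have "\<dots> = (\<Sum>k<n. norm (a k)) * norm u ^ m"
      by (simp add: sum_distrib_right)
    finally have "norm (a n) * norm u * norm u ^ m \<le> (\<Sum>k<n. norm (a k)) * norm u ^ m"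
      using Suc by (simp add: mult_ac)
    moreover have "0 < norm u ^ m"
      using u by (intro zero_less_power) linarith
    ultimately have "norm (a n) * norm u \<le> (\<Sum>k<n. norm (a k))"
      by (simp add: mult_le_cancel_right)
    then have "norm u \<le> (\<Sum>k<n. norm (a k)) / norm (a n)"
      using an by (simp add: field_simps)
    then show ?thesis
      by linarith
  qed
qed

lemma Cauchy_root_bound_power:
  fixes a :: "nat \<Rightarrow> complex"
  assumes "a n \<noteq> 0" "(\<Sum>k\<le>n. a k * u ^ k) = 0" "r \<ge> 1"
    and "\<And>k. k < n \<Longrightarrow> norm (a k) \<le> r ^ N1" "norm (inverse (a n)) \<le> r ^ N2"
  shows "norm u \<le> (1 + real n) * r ^ (N1 + N2)"
proof -
  have "norm u \<le> 1 + (\<Sum>k<n. norm (a k)) * norm (inverse (a n))"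
    using Cauchy_root_bound[OF assms(1,2)] by (simp add: norm_inverse divide_inverse)
  also have "\<dots> \<le> 1 + (\<Sum>k<n. r ^ N1) * r ^ N2"
    using assms(3-5) by (intro add_left_mono mult_mono sum_mono sum_nonneg) auto
  also have "\<dots> \<le> (1 + real n) * r ^ (N1 + N2)"
    using one_le_power[OF assms(3), of "N1 + N2"] by (simp add: power_add algebra_simps)
  finally show ?thesis .
qed

text \<open>For large \<open>|z|\<close>, \<open>f z\<close> is a root of the polynomial \<open>R(u, cnj (f w))\<close> with \<open>w = 1/cnj z\<close>
  near \<open>0\<close>; its coefficients and the inverse of its leading coefficient are meromorphic at \<open>0\<close>,
  hence at most polynomially large in \<open>|z| = 1/|w|\<close>.\<close>

lemma nicely_meromorphic_polynomial_growth:
  fixes f :: "complex \<Rightarrow> complex" and R :: "complex poly poly"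
  assumes f: "f nicely_meromorphic_on UNIV" and nc: "\<not> f constant_on UNIV" and R: "R \<noteq> 0"
    and rel: "\<And>z. z \<noteq> 0 \<Longrightarrow> \<not> is_pole f z \<Longrightarrow> \<not> is_pole f (inverse (cnj z)) \<Longrightarrow>
               poly2 R (f z) (cnj (f (inverse (cnj z)))) = 0"
  obtains R0 C N where "R0 \<ge> 1" "C \<ge> 0"
    "\<And>z. norm z \<ge> R0 \<Longrightarrow> \<not> is_pole f z \<Longrightarrow> norm (f z) \<le> C * norm z ^ N"
proof -
  define n where "n = degree R"
  define \<beta> where "\<beta> = (\<lambda>k w. poly (map_poly cnj (coeff R k)) (f w))"
  have f_mero: "f meromorphic_on UNIV"
    using f by (simp add: nicely_meromorphic_on_def)
  have \<beta>_mero: "\<beta> k meromorphic_on {0}" for k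
    unfolding \<beta>_def by (rule meromorphic_on_subset[OF meromorphic_on_poly_compose[OF f_mero]]) auto
  have "map_poly cnj (coeff R n) \<noteq> 0"
  proof
    assume "map_poly cnj (coeff R n) = 0"
    then have "coeff (map_poly cnj (coeff R n)) i = 0" for i
      by simp
    then have "coeff R n = 0"
      by (simp add: coeff_map_poly poly_eq_iff)
    then show False
      using R by (simp add: n_def)
  qed
  then have "\<forall>\<^sub>F w in at 0. \<beta> n w \<noteq> 0"
    unfolding \<beta>_def by (rule nicely_meromorphic_poly_eventually_nonzero[OF f nc])
  moreover have "\<forall>\<^sub>F w in at 0. \<not> is_pole f w"
    by (rule eventually_not_pole, rule meromorphic_on_isolated_singularity)
       (rule meromorphic_on_subset[OF f_mero], auto)
  moreover obtain N1 where "\<forall>\<^sub>F w in at 0. \<forall>k\<in>{..<n}. norm (\<beta> k w) * norm (w - 0) ^ N1 \<le> 1"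
    using meromorphic_family_power_bound[of "{..<n}" \<beta>] \<beta>_mero by blast
  moreover obtain N2 where "\<forall>\<^sub>F w in at 0. \<forall>M\<ge>N2. norm (inverse (\<beta> n w)) * norm (w - 0) ^ M \<le> 1"
    using meromorphic_on_power_bound[of "\<lambda>w. inverse (\<beta> n w)"] \<beta>_mero
    by (blast intro: meromorphic_intros)
  ultimately have "\<forall>\<^sub>F w in at 0. \<not> is_pole f w \<and> \<beta> n w \<noteq> 0
      \<and> (\<forall>k<n. norm (\<beta> k w) * norm w ^ N1 \<le> 1) \<and> norm (inverse (\<beta> n w)) * norm w ^ N2 \<le> 1"
    by eventually_elim auto
  then obtain d where d: "d > 0" and near_0: "\<And>w. w \<noteq> 0 \<Longrightarrow> norm w < d \<Longrightarrow>
      \<not> is_pole f w \<and> \<beta> n w \<noteq> 0 \<and> (\<forall>k<n. norm (\<beta> k w) * norm w ^ N1 \<le> 1)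
      \<and> norm (inverse (\<beta> n w)) * norm w ^ N2 \<le> 1"
    unfolding eventually_at by auto
  have "norm (f z) \<le> (1 + real n) * norm z ^ (N1 + N2)"
    if z: "norm z \<ge> 1 + 1 / d" "\<not> is_pole f z" for z
  proof -
    define w where "w = inverse (cnj z)"
    have "0 < 1 / d"
      using d by simp
    then have z_pos: "norm z \<ge> 1" "norm z > 0"
      using z(1) by linarith+
    have "1 / d < norm z"
      using z(1) by simp
    then have "inverse (norm z) < d"
      using d z_pos by (simp add: field_simps)
    then have "w \<noteq> 0" "norm w < d"
      using z_pos by (auto simp: w_def norm_inverse)
    note w = near_0[OF this]
    have norm_w_power: "norm w ^ M = inverse (norm z ^ M)" for M
      by (simp add: w_def norm_inverse power_inverse)
    show ?thesis
    proof (rule Cauchy_root_bound_power[where a = "\<lambda>k. cnj (\<beta> k w)"])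
      show "cnj (\<beta> n w) \<noteq> 0"
        using w by simp
      show "(\<Sum>k\<le>n. cnj (\<beta> k w) * f z ^ k) = 0"
        using rel[of z] z w z_pos by (simp add: poly2_altdef \<beta>_def n_def w_def)
      show "norm (cnj (\<beta> k w)) \<le> norm z ^ N1" if "k < n" for k
      proof -
        have "norm (\<beta> k w) * inverse (norm z ^ N1) \<le> 1"
          using w that norm_w_power by auto
        then show ?thesis
          using z_pos by (simp add: field_simps)
      qed
      have "norm (inverse (\<beta> n w)) * inverse (norm z ^ N2) \<le> 1"
        using w norm_w_power by auto
      then show "norm (inverse (cnj (\<beta> n w))) \<le> norm z ^ N2"
        using z_pos w by (simp add: field_simps norm_divide)
    qed (use z_pos in auto)
  qed
  then show thesis
    using that[of "1 + 1 / d" "1 + real n" "N1 + N2"] d by auto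
qed

lemma is_pole_norm_bound_of_growth:
  fixes f :: "complex \<Rightarrow> complex"
  assumes f: "f meromorphic_on UNIV" and C: "C \<ge> 0"
    and growth: "\<And>z. norm z \<ge> R0 \<Longrightarrow> \<not> is_pole f z \<Longrightarrow> norm (f z) \<le> C * norm z ^ N"
    and pole: "is_pole f z"
  shows "norm z < R0 + 1"
proof (rule ccontr)
  assume far: "\<not> norm z < R0 + 1"
  have "\<forall>\<^sub>F w in at z. \<not> is_pole f w"
    by (rule eventually_not_pole, rule meromorphic_on_isolated_singularity)
       (rule meromorphic_on_subset[OF f], auto)
  moreover have "\<forall>\<^sub>F w in at z. dist w z < 1"
    unfolding eventually_at by (rule exI[of _ 1]) auto
  moreover have "\<forall>\<^sub>F w in at z. C * (norm z + 1) ^ N + 1 \<le> norm (f w)"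
  proof -
    have "0 \<le> C * (norm z + 1) ^ N"
      using C by simp
    then have "C * (norm z + 1) ^ N + 1 > 0"
      by linarith
    then show ?thesis
      using pole unfolding is_pole_def by (simp add: filterlim_at_infinity[OF order.refl])
  qed
  ultimately have "\<forall>\<^sub>F w in at z. False"
  proof eventually_elim
    case (elim w)
    have "norm w \<ge> norm z - dist w z"
      using norm_triangle_ineq[of "z - w" w] by (simp add: dist_norm norm_minus_commute)
    then have "norm w \<ge> R0"
      using elim(2) far by linarith
    have "norm w \<le> norm z + 1"
      using elim(2) norm_triangle_ineq[of "w - z" z] by (simp add: dist_norm)
    have "norm (f w) \<le> C * norm w ^ N"
      using growth \<open>norm w \<ge> R0\<close> elim(1) by blast
    also have "\<dots> \<le> C * (norm z + 1) ^ N"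
      using C \<open>norm w \<le> norm z + 1\<close> by (intro mult_left_mono power_mono) auto
    finally have "norm (f w) \<le> C * (norm z + 1) ^ N" .
    with elim(3) show False
      by linarith
  qed
  then show False
    by (simp add: eventually_False)
qed

text \<open>Multiplying by \<open>\<Prod>(z - p)^(N\<^sub>p + 1)\<close>, with \<open>N\<^sub>p\<close> as in
  \<open>meromorphic_on_power_bound\<close>, makes every pole a removable singularity with value \<open>0\<close>.\<close>

lemma nicely_meromorphic_clear_finite_poles:
  fixes f :: "complex \<Rightarrow> complex"
  assumes f: "f nicely_meromorphic_on UNIV" and fin: "finite {z. is_pole f z}"
  obtains q where "q \<noteq> 0" "\<And>z. poly q z = 0 \<longleftrightarrow> is_pole f z"
    "(\<lambda>z. poly q z * f z) holomorphic_on UNIV"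
proof -
  define Pl where "Pl = {z. is_pole f z}"
  have f_mero: "f meromorphic_on UNIV"
    using f by (simp add: nicely_meromorphic_on_def)
  have "\<forall>p\<in>Pl. \<exists>N. \<forall>\<^sub>F w in at p. \<forall>M\<ge>N. norm (f w) * norm (w - p) ^ M \<le> 1"
    by (intro ballI meromorphic_on_power_bound meromorphic_on_subset[OF f_mero]) auto
  then obtain N where N: "\<forall>p\<in>Pl. \<forall>\<^sub>F w in at p. \<forall>M\<ge>N p. norm (f w) * norm (w - p) ^ M \<le> 1"
    by (rule bchoice[elim_format]) blast
  define q where "q = (\<Prod>p\<in>Pl. [:-p, 1:] ^ Suc (N p))"
  have poly_q: "poly q z = (\<Prod>p\<in>Pl. (z - p) ^ Suc (N p))" for z
    by (simp add: q_def poly_prod poly_power del: power_Suc)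
  have "q \<noteq> 0"
    using fin by (simp add: q_def Pl_def del: power_Suc)
  moreover have q_root: "poly q z = 0 \<longleftrightarrow> is_pole f z" for z
    using fin by (auto simp: poly_q Pl_def)
  moreover have "(\<lambda>z. poly q z * f z) holomorphic_on UNIV"
  proof (rule no_isolated_singularity'[of Pl])
    have "f holomorphic_on UNIV - Pl"
      by (rule holomorphic_on_subset[OF nicely_meromorphic_holomorphic_off_poles[OF f]])
         (auto simp: Pl_def)
    then show "(\<lambda>z. poly q z * f z) holomorphic_on UNIV - Pl"
      by (intro holomorphic_intros)
    show "((\<lambda>z. poly q z * f z) \<longlongrightarrow> poly q p * f p) (at p within UNIV)" if p: "p \<in> Pl" for p
    proof -
      define q' where "q' = (\<Prod>p'\<in>Pl - {p}. [:-p', 1:] ^ Suc (N p'))"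
      have q_split: "poly q w = (w - p) ^ Suc (N p) * poly q' w" for w
        using fin p by (simp add: poly_q q'_def poly_prod poly_power prod.remove Pl_def del: power_Suc)
      have "((\<lambda>z. poly q z * f z) \<longlongrightarrow> 0) (at p)"
      proof (rule Lim_null_comparison)
        show "\<forall>\<^sub>F w in at p. norm (poly q w * f w) \<le> norm (w - p) * norm (poly q' w)"
          using bspec[OF N p]
        proof eventually_elim
          case (elim w)
          then have "norm (f w) * norm (w - p) ^ N p \<le> 1"
            by blast
          then have "norm (w - p) * norm (poly q' w) * (norm (f w) * norm (w - p) ^ N p)
              \<le> norm (w - p) * norm (poly q' w)"
            by (rule mult_left_le) auto
          then show ?case
            by (simp add: q_split norm_mult norm_power mult_ac)
        qed
        have "((\<lambda>w. norm (w - p) * norm (poly q' w)) \<longlongrightarrow> norm (p - p) * norm (poly q' p)) (at p)"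
          by (intro tendsto_intros)
        then show "((\<lambda>w. norm (w - p) * norm (poly q' w)) \<longlongrightarrow> 0) (at p)"
          by simp
      qed
      moreover have "poly q p = 0"
        using p q_root by (simp add: Pl_def)
      ultimately show ?thesis
        by simp
    qed
  qed (use fin in \<open>auto simp: Pl_def\<close>)
  ultimately show thesis
    using that by blast
qed

lemma norm_poly_le:
  fixes z :: complex
  assumes "norm z \<ge> 1"
  shows "norm (poly p z) \<le> (\<Sum>i\<le>degree p. norm (coeff p i)) * norm z ^ degree p"
proof -
  have "norm (poly p z) \<le> (\<Sum>i\<le>degree p. norm (coeff p i * z ^ i))"
    unfolding poly_altdef by (rule norm_sum)
  also have "\<dots> \<le> (\<Sum>i\<le>degree p. norm (coeff p i) * norm z ^ degree p)"
    using assms by (intro sum_mono) (auto simp: norm_mult norm_power intro!: mult_left_mono power_increasing)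
  finally show ?thesis
    by (simp add: sum_distrib_right)
qed

lemma rational_function_of_polynomial_growth:
  fixes f :: "complex \<Rightarrow> complex"
  assumes f: "f nicely_meromorphic_on UNIV" and R0: "R0 \<ge> 1" and C: "C \<ge> 0"
    and growth: "\<And>z. norm z \<ge> R0 \<Longrightarrow> \<not> is_pole f z \<Longrightarrow> norm (f z) \<le> C * norm z ^ N"
  shows "rational_function f"
proof -
  have f_mero: "f meromorphic_on UNIV"
    using f by (simp add: nicely_meromorphic_on_def)
  have "finite (cball 0 (R0 + 1) \<inter> {z. is_pole f z})"
    by (rule sparse_in_compact_finite[OF sparse_in_subset[OF nicely_meromorphic_poles_sparse[OF f]]])
       auto
  moreover have "cball 0 (R0 + 1) \<inter> {z. is_pole f z} = {z. is_pole f z}"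
    using is_pole_norm_bound_of_growth[OF f_mero C growth] by (auto simp: less_imp_le)
  ultimately have "finite {z. is_pole f z}"
    by simp
  then obtain q where q: "q \<noteq> 0" "\<And>z. poly q z = 0 \<longleftrightarrow> is_pole f z"
      and h: "(\<lambda>z. poly q z * f z) holomorphic_on UNIV"
    using nicely_meromorphic_clear_finite_poles[OF f] by blast
  define B where "B = (\<Sum>i\<le>degree q. norm (coeff q i))"
  define c where "c = (\<lambda>k. (deriv ^^ k) (\<lambda>z. poly q z * f z) 0 / fact k)"
  have "norm (poly q z * f z) \<le> (B * C) * norm z ^ (degree q + N)" if z: "R0 + 1 \<le> norm z" for z
  proof -
    have "\<not> is_pole f z"
      using is_pole_norm_bound_of_growth[OF f_mero C growth] z by force
    then have "norm (poly q z) * norm (f z) \<le> (B * norm z ^ degree q) * (C * norm z ^ N)"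
      using norm_poly_le[of z q] growth[of z] z R0
      by (intro mult_mono) (auto simp: B_def intro!: mult_nonneg_nonneg sum_nonneg)
    then show ?thesis
      by (simp add: norm_mult power_add mult_ac)
  qed
  then have Liouville: "poly q z * f z = (\<Sum>k\<le>degree q + N. c k * z ^ k)" for z
    unfolding c_def by (rule Liouville_polynomial[OF h])
  define p where "p = (\<Sum>k\<le>degree q + N. monom (c k) k)"
  have p: "poly q z * f z = poly p z" for z
    by (simp add: p_def poly_sum poly_monom Liouville)
  show ?thesis
    unfolding rational_function_def
  proof (intro exI conjI allI impI)
    fix z assume "poly q z \<noteq> 0"
    then show "f z = poly p z / poly q z"
      using p[of z] by (simp add: field_simps)
  qed (rule q(1))
qed

section \<open>Quotients of finite Blaschke products\<close>

definition blaschke_factor :: "complex \<Rightarrow> complex \<Rightarrow> complex" where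
  "blaschke_factor a z = (z - a) / (1 - cnj a * z)"

lemma finite_blaschke_const:
  assumes "norm c = 1"
  shows "finite_blaschke (\<lambda>z. c)"
proof -
  have "c \<noteq> 0"
    using assms by auto
  then have "exp (\<i> * of_real (Arg c)) = c"
    using cis_Arg assms by (simp add: cis_conv_exp[symmetric] sgn_div_norm)
  then show ?thesis
    unfolding finite_blaschke_def by (intro exI[of _ "Arg c"] exI[of _ "[]"]) simp
qed

lemma finite_blaschke_mult_factor:
  assumes "finite_blaschke B" "norm a < 1"
  shows "finite_blaschke (\<lambda>z. B z * blaschke_factor a z)"
proof -
  obtain \<theta> as where as: "\<forall>a\<in>set as. norm a < 1"
    and B: "B = (\<lambda>z. exp (\<i> * of_real \<theta>) * prod_list (map (\<lambda>a. (z - a) / (1 - cnj a * z)) as))"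
    using assms(1) unfolding finite_blaschke_def by blast
  have "(\<lambda>z. B z * blaschke_factor a z) =
      (\<lambda>z. exp (\<i> * of_real \<theta>) * prod_list (map (\<lambda>a. (z - a) / (1 - cnj a * z)) (a # as)))"
    by (simp add: B blaschke_factor_def mult_ac)
  then show ?thesis
    unfolding finite_blaschke_def using as assms(2) by (intro exI[of _ \<theta>] exI[of _ "a # as"]) auto
qed

lemma finite_blaschke_factor_poles: "finite {z. 1 - cnj a * z = 0}"
proof (rule finite_subset)
  show "{z. 1 - cnj a * z = 0} \<subseteq> {inverse (cnj a)}"
    using inverse_unique by fastforce
qed simp

lemma blaschke_quotient_const: "norm c = 1 \<Longrightarrow> blaschke_quotient (\<lambda>z. c)"
  unfolding blaschke_quotient_def
  by (rule exI[of _ "\<lambda>z. c"], rule exI[of _ "\<lambda>z. 1"], rule exI[of _ "{}"])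
     (simp add: finite_blaschke_const)

lemma blaschke_quotient_cong:
  assumes "blaschke_quotient f" "finite S" "\<And>z. z \<notin> S \<Longrightarrow> g z = f z"
  shows "blaschke_quotient g"
proof -
  obtain B1 B2 S' where "finite_blaschke B1" "finite_blaschke B2" "finite S'"
      "\<And>z. z \<notin> S' \<Longrightarrow> f z = B1 z / B2 z"
    using assms(1) unfolding blaschke_quotient_def by blast
  then show ?thesis
    unfolding blaschke_quotient_def using assms(2,3) by (intro exI[of _ B1] exI[of _ B2] exI[of _ "S \<union> S'"]) auto
qed

lemma blaschke_quotient_inverse:
  assumes "blaschke_quotient f"
  shows "blaschke_quotient (\<lambda>z. inverse (f z))"
proof -
  obtain B1 B2 S where "finite_blaschke B1" "finite_blaschke B2" "finite S"
      "\<And>z. z \<notin> S \<Longrightarrow> f z = B1 z / B2 z"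
    using assms unfolding blaschke_quotient_def by blast
  then show ?thesis
    unfolding blaschke_quotient_def by (intro exI[of _ B2] exI[of _ B1] exI[of _ S]) simp
qed

lemma blaschke_quotient_mult_factor:
  assumes "blaschke_quotient f" "norm a < 1"
  shows "blaschke_quotient (\<lambda>z. f z * blaschke_factor a z)"
proof -
  obtain B1 B2 S where "finite_blaschke B1" "finite_blaschke B2" "finite S"
      "\<And>z. z \<notin> S \<Longrightarrow> f z = B1 z / B2 z"
    using assms(1) unfolding blaschke_quotient_def by blast
  with finite_blaschke_mult_factor[OF _ assms(2)] show ?thesis
    unfolding blaschke_quotient_def
    by (intro exI[of _ "\<lambda>z. B1 z * blaschke_factor a z"] exI[of _ B2] exI[of _ S]) auto
qed

definition disc_root_count :: "complex poly \<Rightarrow> nat" where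
  "disc_root_count p = size (filter_mset (\<lambda>a. norm a < 1) (proots p))"

text \<open>\<open>p'\<close> replaces the factor \<open>z - a\<close> of \<open>p\<close> by \<open>1 - cnj a * z\<close>, moving the root \<open>a\<close> to its
  reflection \<open>inverse (cnj a)\<close> outside the disc.\<close>

lemma reflect_disc_root:
  fixes p :: "complex poly"
  assumes "p \<noteq> 0" "poly p a = 0" "norm a < 1"
  obtains p' where "p' \<noteq> 0" "disc_root_count p' < disc_root_count p"
    "\<And>z. norm z = 1 \<Longrightarrow> norm (poly p' z) = norm (poly p z)"
    "\<And>z. 1 - cnj a * z \<noteq> 0 \<Longrightarrow> poly p z = poly p' z * blaschke_factor a z"
proof -
  obtain p1 where p1: "p = [:-a, 1:] * p1"
    using assms(2) by (metis dvdE poly_eq_0_iff_dvd)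
  have "p1 \<noteq> 0"
    using assms(1) p1 by auto
  define p' where "p' = p1 * [:1, -cnj a:]"
  have p'_z: "poly p' z = poly p1 z * (1 - cnj a * z)" and p_z: "poly p z = poly p1 z * (z - a)" for z
    by (simp_all add: p'_def p1 algebra_simps)
  have "p' \<noteq> 0"
    unfolding p'_def using \<open>p1 \<noteq> 0\<close> by (intro no_zero_divisors) auto
  moreover have "disc_root_count p' < disc_root_count p"
  proof -
    have "proots [:1, -cnj a:] = {#inverse (cnj a)#}" if "a \<noteq> 0"
    proof -
      have eq: "[:1, -cnj a:] = smult (-cnj a) [:- inverse (cnj a), 1:]"
        using that by simp
      show ?thesis
        unfolding eq using that proots_linear_factor[of "- inverse (cnj a)"]
        by (subst proots_smult) auto
    qed
    moreover have "norm (inverse (cnj a)) > 1" if "a \<noteq> 0"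
      using that assms(3) by (simp add: norm_inverse one_less_inverse)
    ultimately have "disc_root_count [:1, -cnj a:] = 0"
      by (cases "a = 0") (simp_all add: disc_root_count_def one_pCons[symmetric])
    moreover have "proots p = {#a#} + proots p1"
      unfolding p1 using \<open>p1 \<noteq> 0\<close> by (subst proots_mult) auto
    moreover have "proots p' = proots p1 + proots [:1, -cnj a:]"
      unfolding p'_def using \<open>p1 \<noteq> 0\<close> by (subst proots_mult) auto
    ultimately show ?thesis
      using assms(3) unfolding disc_root_count_def by simp
  qed
  moreover have "norm (poly p' z) = norm (poly p z)" if "norm z = 1" for z
  proof -
    have "z * cnj z = 1"
      using complex_norm_square[of z] that by simp
    then have "1 - cnj a * z = z * cnj (z - a)"
      by (simp add: algebra_simps)
    then have "norm (1 - cnj a * z) = norm z * norm (cnj (z - a))"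
      by (simp only: norm_mult)
    then have "norm (1 - cnj a * z) = norm (z - a)"
      using that by (simp only: complex_mod_cnj mult_1)
    then show ?thesis
      by (simp add: p'_z p_z norm_mult)
  qed
  moreover have "poly p z = poly p' z * blaschke_factor a z" if "1 - cnj a * z \<noteq> 0" for z
    using that by (simp add: p'_z p_z blaschke_factor_def)
  ultimately show thesis
    using that by blast
qed

definition cnj_reflect_poly :: "complex poly \<Rightarrow> complex poly" where
  "cnj_reflect_poly p = reflect_poly (map_poly cnj p)"

lemma poly_cnj_reflect_poly_unit_circle:
  assumes "norm z = 1"
  shows "poly (cnj_reflect_poly p) z = z ^ degree p * cnj (poly p z)"
proof -
  have "inverse z = cnj z"
    using inverse_cnj_unit_circle[OF assms] by (metis complex_cnj_cnj complex_cnj_inverse)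
  moreover have "z \<noteq> 0"
    using assms by auto
  ultimately show ?thesis
    by (simp add: cnj_reflect_poly_def poly_reflect_poly_nz degree_map_poly)
qed

lemma poly_cnj_reflect_poly_eq_0:
  assumes "z \<noteq> 0" "poly (cnj_reflect_poly p) z = 0"
  shows "poly p (cnj (inverse z)) = 0"
  using assms by (simp add: cnj_reflect_poly_def poly_reflect_poly_nz)

text \<open>A root \<open>b\<close> of \<open>q\<close> outside the open disc would, by the identity \<open>p p* = q q*\<close>
  (up to powers of \<open>z\<close>), be the reflection of a root of \<open>p\<close>; this forces \<open>|b| = 1\<close> and
  \<open>b\<close> a common root.\<close>

lemma coprime_reflection_identity_no_root:
  fixes p q :: "complex poly"
  assumes id: "monom 1 (degree q) * p * cnj_reflect_poly p = monom 1 (degree p) * q * cnj_reflect_poly q"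
    and cop: "coprime p q"
    and p_roots: "\<And>a. poly p a = 0 \<Longrightarrow> norm a \<ge> 1"
    and q_roots: "\<And>a. poly q a = 0 \<Longrightarrow> norm a \<ge> 1"
  shows "poly q b \<noteq> 0"
proof
  assume qb: "poly q b = 0"
  then have "norm b \<ge> 1"
    by (rule q_roots)
  then have b: "norm b \<ge> 1" "b \<noteq> 0"
    by auto
  have pb: "poly p b \<noteq> 0"
  proof
    assume "poly p b = 0"
    then have "[:-b, 1:] dvd p" "[:-b, 1:] dvd q"
      using qb by (simp_all add: poly_eq_0_iff_dvd)
    then have "is_unit [:-b, 1:]"
      using cop coprime_common_divisor by blast
    then show False
      by (simp add: is_unit_pCons_iff)
  qed
  have "poly (monom 1 (degree q) * p * cnj_reflect_poly p) b = 0"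
    unfolding id using qb by simp
  then have "poly (cnj_reflect_poly p) b = 0"
    using b pb by (simp add: poly_monom)
  then have pb': "poly p (cnj (inverse b)) = 0"
    using poly_cnj_reflect_poly_eq_0 b by blast
  then have "norm b \<le> 1"
    using p_roots[OF pb'] b by (simp add: norm_inverse one_le_inverse_iff)
  then have "norm b = 1"
    using b by simp
  then have "cnj (inverse b) = b"
    using inverse_cnj_unit_circle by simp
  then show False
    using pb pb' by simp
qed

lemma poly_eq_if_eq_on_infinite:
  fixes p q :: "complex poly"
  assumes "infinite A" "\<And>z. z \<in> A \<Longrightarrow> poly p z = poly q z"
  shows "p = q"
proof (rule ccontr)
  assume "p \<noteq> q"
  then have "finite {z. poly (p - q) z = 0}"
    by (intro poly_roots_finite) simp
  moreover have "A \<subseteq> {z. poly (p - q) z = 0}"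
    using assms(2) by auto
  ultimately show False
    using assms(1) finite_subset by blast
qed

lemma poly_const_if_no_roots:
  fixes p :: "complex poly"
  assumes "\<And>z. poly p z \<noteq> 0"
  obtains c where "p = [:c:]"
  using fundamental_theorem_of_algebra_alt[of p] assms by blast

lemma unimodular_const_if_no_disc_roots:
  fixes p q :: "complex poly"
  assumes q: "q \<noteq> 0" and A: "infinite A" "A \<subseteq> sphere 0 1"
    and norm_eq: "\<And>z. z \<in> A \<Longrightarrow> norm (poly p z) = norm (poly q z)"
    and p_roots: "\<And>a. poly p a = 0 \<Longrightarrow> norm a \<ge> 1"
    and q_roots: "\<And>a. poly q a = 0 \<Longrightarrow> norm a \<ge> 1"
  obtains c where "norm c = 1" "\<And>z. poly q z \<noteq> 0 \<Longrightarrow> poly p z / poly q z = c"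
proof -
  define g where "g = gcd p q"
  define p0 where "p0 = p div g"
  define q0 where "q0 = q div g"
  have pg: "p = g * p0" and qg: "q = g * q0"
    by (simp_all add: p0_def q0_def g_def)
  have cop: "coprime p0 q0"
    unfolding p0_def q0_def g_def using q by (intro div_gcd_coprime) auto
  then have cop': "coprime q0 p0"
    by (simp add: coprime_commute)
  have "g \<noteq> 0"
    using q by (simp add: g_def)
  define A0 where "A0 = A - {z. poly g z = 0}"
  have A0: "infinite A0"
    unfolding A0_def using A(1) poly_roots_finite[OF \<open>g \<noteq> 0\<close>] by (rule Diff_infinite_finite[rotated])
  have norm_eq0: "norm (poly p0 z) = norm (poly q0 z)" if "z \<in> A0" for z
    using norm_eq[of z] that by (auto simp: A0_def pg qg norm_mult)
  have id: "monom 1 (degree q0) * p0 * cnj_reflect_poly p0 = monom 1 (degree p0) * q0 * cnj_reflect_poly q0"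
  proof (rule poly_eq_if_eq_on_infinite[OF A0])
    fix z assume z: "z \<in> A0"
    then have "norm z = 1"
      using A(2) by (auto simp: A0_def)
    moreover have "poly p0 z * cnj (poly p0 z) = poly q0 z * cnj (poly q0 z)"
      using norm_eq0[OF z] by (metis complex_norm_square)
    ultimately show "poly (monom 1 (degree q0) * p0 * cnj_reflect_poly p0) z
        = poly (monom 1 (degree p0) * q0 * cnj_reflect_poly q0) z"
      by (simp add: poly_monom poly_cnj_reflect_poly_unit_circle mult_ac)
  qed
  have p0_roots: "norm a \<ge> 1" if "poly p0 a = 0" for a
    using p_roots that by (simp add: pg)
  have q0_roots: "norm a \<ge> 1" if "poly q0 a = 0" for a
    using q_roots that by (simp add: qg)
  obtain c0 where c0: "p0 = [:c0:]"
    using coprime_reflection_identity_no_root[OF id[symmetric] cop' q0_roots p0_roots]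
    by (rule poly_const_if_no_roots)
  obtain d0 where d0: "q0 = [:d0:]"
    using coprime_reflection_identity_no_root[OF id cop p0_roots q0_roots]
    by (rule poly_const_if_no_roots)
  obtain z0 where "z0 \<in> A0"
    using A0 by (metis finite.emptyI ex_in_conv)
  then have "norm c0 = norm d0"
    using norm_eq0 c0 d0 by fastforce
  moreover have "d0 \<noteq> 0"
    using q qg d0 by auto
  ultimately have "norm (c0 / d0) = 1"
    by (simp add: norm_divide)
  moreover have "poly p z / poly q z = c0 / d0" if "poly q z \<noteq> 0" for z
    using that by (simp add: pg qg c0 d0)
  ultimately show thesis
    using that by blast
qed

lemma blaschke_quotient_poly_div_poly:
  fixes p q :: "complex poly"
  assumes "q \<noteq> 0" "infinite A" "A \<subseteq> sphere 0 1"
    and "\<And>z. z \<in> A \<Longrightarrow> norm (poly p z) = norm (poly q z)"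
  shows "blaschke_quotient (\<lambda>z. poly p z / poly q z)"
  using assms(1,4)
proof (induction "disc_root_count p + disc_root_count q" arbitrary: p q rule: less_induct)
  case less
  have "p \<noteq> 0"
  proof
    assume "p = 0"
    then have "A \<subseteq> {z. poly q z = 0}"
      using less.prems(2) by auto
    then show False
      using assms(2) poly_roots_finite[OF less.prems(1)] finite_subset by blast
  qed
  consider (p_root) a where "poly p a = 0" "norm a < 1" | (q_root) b where "poly q b = 0" "norm b < 1"
    | (no_root) "\<And>a. poly p a = 0 \<Longrightarrow> norm a \<ge> 1" "\<And>a. poly q a = 0 \<Longrightarrow> norm a \<ge> 1"
    by (meson not_le)
  then show ?case
  proof cases
    case p_root
    obtain p' where p': "p' \<noteq> 0" "disc_root_count p' < disc_root_count p"
        "\<And>z. norm z = 1 \<Longrightarrow> norm (poly p' z) = norm (poly p z)"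
        "\<And>z. 1 - cnj a * z \<noteq> 0 \<Longrightarrow> poly p z = poly p' z * blaschke_factor a z"
      using reflect_disc_root[OF \<open>p \<noteq> 0\<close> p_root] by blast
    have "blaschke_quotient (\<lambda>z. poly p' z / poly q z)"
      using less.hyps[of p' q] p' less.prems assms(3) by (auto simp: subset_iff)
    then have "blaschke_quotient (\<lambda>z. poly p' z / poly q z * blaschke_factor a z)"
      using p_root(2) by (rule blaschke_quotient_mult_factor)
    then show ?thesis
      by (rule blaschke_quotient_cong[OF _ finite_blaschke_factor_poles[of a]]) (simp add: p'(4))
  next
    case q_root
    obtain q' where q': "q' \<noteq> 0" "disc_root_count q' < disc_root_count q"
        "\<And>z. norm z = 1 \<Longrightarrow> norm (poly q' z) = norm (poly q z)"
        "\<And>z. 1 - cnj b * z \<noteq> 0 \<Longrightarrow> poly q z = poly q' z * blaschke_factor b z"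
      using reflect_disc_root[OF less.prems(1) q_root] by blast
    have "blaschke_quotient (\<lambda>z. poly p z / poly q' z)"
      using less.hyps[of p q'] q' less.prems assms(3) by (auto simp: subset_iff)
    then have "blaschke_quotient (\<lambda>z. inverse (poly p z / poly q' z) * blaschke_factor b z)"
      using q_root(2) by (intro blaschke_quotient_mult_factor blaschke_quotient_inverse)
    then have "blaschke_quotient (\<lambda>z. poly q z / poly p z)"
      by (rule blaschke_quotient_cong[OF _ finite_blaschke_factor_poles[of b]]) (simp add: q'(4))
    then show ?thesis
      using blaschke_quotient_inverse by fastforce
  next
    case no_root
    obtain c where "norm c = 1" "\<And>z. poly q z \<noteq> 0 \<Longrightarrow> poly p z / poly q z = c"
      using unimodular_const_if_no_disc_roots[OF less.prems(1) assms(2,3) less.prems(2) no_root] by blast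
    then show ?thesis
      by (intro blaschke_quotient_cong[OF blaschke_quotient_const poly_roots_finite[OF less.prems(1)]])
         auto
  qed
qed

lemma rational_function_unimodular_blaschke_quotient:
  assumes "rational_function f" "infinite A" "A \<subseteq> sphere 0 1" "\<And>z. z \<in> A \<Longrightarrow> norm (f z) = 1"
  shows "blaschke_quotient f"
proof -
  obtain p q where q: "q \<noteq> 0" and f_eq: "\<And>z. poly q z \<noteq> 0 \<Longrightarrow> f z = poly p z / poly q z"
    using assms(1) unfolding rational_function_def by blast
  define A' where "A' = A - {z. poly q z = 0}"
  have "infinite A'"
    unfolding A'_def using assms(2) by (rule Diff_infinite_finite[OF poly_roots_finite[OF q]])
  moreover have "A' \<subseteq> sphere 0 1"
    using assms(3) by (auto simp: A'_def)
  moreover have "norm (poly p z) = norm (poly q z)" if z: "z \<in> A'" for z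
  proof -
    have "poly q z \<noteq> 0" "norm (f z) = 1"
      using z assms(4) by (auto simp: A'_def)
    then show ?thesis
      using f_eq[of z] by (simp add: norm_divide field_simps)
  qed
  ultimately have "blaschke_quotient (\<lambda>z. poly p z / poly q z)"
    by (rule blaschke_quotient_poly_div_poly[OF q])
  then show ?thesis
    by (rule blaschke_quotient_cong[OF _ poly_roots_finite[OF q]]) (simp add: f_eq)
qed

theorem theorem1:
  fixes f :: "complex \<Rightarrow> complex" and A :: "complex set" and P :: "real poly poly"
  assumes "f nicely_meromorphic_on UNIV"
    and "\<not> f constant_on UNIV"
    and "A \<subseteq> sphere 0 1" and "compact A" and "connected A" and "\<exists>a\<in>A. \<exists>b\<in>A. a \<noteq> b"
    and "irreducible P" and "\<not> (\<exists>c. P = [:[:c:]:])"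
    and "\<forall>z\<in>A. \<not> is_pole f z \<and> f z \<in> alg_curve P"
  shows "rational_function f \<and> (alg_curve P = sphere 0 1 \<longrightarrow> blaschke_quotient f)"
proof -
  note f = assms(1) and A_circle = assms(3) and on_curve = assms(9)
  have "P \<noteq> 0"
    using assms(7) by auto
  then obtain R where R: "R \<noteq> 0" and R_eval: "\<And>u. poly2 R u (cnj u) = of_real (eval2 P (Re u) (Im u))"
    using eval2_conv_poly2 by blast
  obtain a b where ab: "a \<in> A" "b \<in> A" "a \<noteq> b"
    using assms(6) by blast
  then have "A \<noteq> {x}" for x
    by auto
  then have limpt: "a islimpt A"
    by (rule connected_imp_perfect[OF assms(5) ab(1)])
  have no_poles: "\<forall>z\<in>A. \<not> is_pole f z"
    using on_curve by blast
  have "\<forall>z\<in>A. poly2 R (f z) (cnj (f z)) = 0"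
    using on_curve by (simp add: R_eval alg_curve_def)
  then have "poly2 R (f z) (cnj (f (inverse (cnj z)))) = 0"
    if "z \<noteq> 0" "\<not> is_pole f z" "\<not> is_pole f (inverse (cnj z))" for z
    by (rule nicely_meromorphic_reflection_identity[OF f A_circle ab(1) limpt no_poles _ that])
  then obtain R0 C N where "R0 \<ge> 1" "C \<ge> 0"
      "\<And>z. norm z \<ge> R0 \<Longrightarrow> \<not> is_pole f z \<Longrightarrow> norm (f z) \<le> C * norm z ^ N"
    using nicely_meromorphic_polynomial_growth[OF f assms(2) R] by blast
  then have rational: "rational_function f"
    by (intro rational_function_of_polynomial_growth[OF f])
  moreover have "blaschke_quotient f" if "alg_curve P = sphere 0 1"
  proof (rule rational_function_unimodular_blaschke_quotient[OF rational _ A_circle])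
    show "infinite A"
      using limpt islimpt_finite by blast
    show "norm (f z) = 1" if "z \<in> A" for z
      using on_curve \<open>alg_curve P = sphere 0 1\<close> that by auto
  qed
  ultimately show ?thesis
    by blast
qed

end
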